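(* Let $k\ge0$ and let $s$ be the singular factor of length $q_k$ of slope $\alpha$. Then (i) $s$ begins and ends with the same letter; (ii) $s$ is a palindrome; and (iii) the Parikh vectors of the proper prefixes and of the proper suffixes of $s$ are contained in the Parikh vector of every factor of slope $\alpha$ of length $q_k$.
   Context: $\alpha\in(0,1)$ irrational, $\alpha=[0;a_1,a_2,\ldots]$ with positive integers $a_i$, $a_1\ge2$; $q_0=1$, $q_1=a_1$, $q_k=a_kq_{k-1}+q_{k-2}$ ($k\ge2$). Identify the circle $\mathbb{T}$ with $[0,1)$, $R(\rho)=\{\rho+\alpha\}$; fix one convention, $I_0=[0,1-\alpha)$, $I_1=[1-\alpha,1)$ or $I_0=(0,1-\alpha]$, $I_1=(1-\alpha,1]$. $\mathbf{s}_{\rho,\alpha}$ has $n$-th letter $0$ if $R^n(\rho)\in I_0$ and $1$ otherwise; all such words share the set $\mathcal{L}_\alpha$ of finite factors (factors of slope $\alpha$). For $w=b_0\cdots b_{n-1}\in\mathcal{L}_\alpha$, $[w]=\bigcap_{i=0}^{n-1}R^{-i}(I_{b_i})$, so $\mathbf{s}_{\rho,\alpha}$ begins with $w$ iff $\rho\in[w]$; the intervals $[w]$ with $|w|=n$ are the $n+1$ arcs cut out by $0,\{-\alpha\},\ldots,\{-n\alpha\}$. The singular factor of length $q_k$ is the unique $s\in\mathcal{L}_\alpha$ of length $q_k$ whose interval $[s]$ has endpoints $0$ and $\{-q_k\alpha\}$. A proper prefix (suffix) of $s$ is a nonempty prefix (suffix) different from $s$. The Parikh vector of a binary word $u$ is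 $(|u|_0,|u|_1)$; $P$ is contained in $Q$ if $P\le Q$ componentwise and $P\ne Q$. *)

theory Defs
  imports Complex_Main "HOL-Library.Sublist"
begin

fun gauss_x :: "real \<Rightarrow> nat \<Rightarrow> real" where
  "gauss_x \<alpha> 0 = \<alpha>"
| "gauss_x \<alpha> (Suc n) = frac (1 / gauss_x \<alpha> n)"

definition cf_a :: "real \<Rightarrow> nat \<Rightarrow> nat" where
  "cf_a \<alpha> n = (if n = 0 then 0 else nat \<lfloor>1 / gauss_x \<alpha> (n - 1)\<rfloor>)"

fun cf_q :: "real \<Rightarrow> nat \<Rightarrow> nat" where
  "cf_q \<alpha> 0 = 1"
| "cf_q \<alpha> (Suc 0) = cf_a \<alpha> 1"
| "cf_q \<alpha> (Suc (Suc k)) = cf_a \<alpha> (Suc (Suc k)) * cf_q \<alpha> (Suc k) + cf_q \<alpha> k"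

text \<open>Rotation R(rho) = {rho + alpha} on [0,1); convention I_0 = [0, 1 - alpha), I_1 = [1 - alpha, 1).\<close>
definition rot :: "real \<Rightarrow> real \<Rightarrow> real" where
  "rot \<alpha> \<rho> = frac (\<rho> + \<alpha>)"

definition I0 :: "real \<Rightarrow> real set" where
  "I0 \<alpha> = {0..<1 - \<alpha>}"

definition sword :: "real \<Rightarrow> real \<Rightarrow> nat \<Rightarrow> nat" where
  "sword \<rho> \<alpha> n = (if (rot \<alpha> ^^ n) \<rho> \<in> I0 \<alpha> then 0 else 1)"

definition factors_slope :: "real \<Rightarrow> nat list set" where
  "factors_slope \<alpha> = {w. \<exists>\<rho>\<in>{0..<1}. \<exists>m. w = map (sword \<rho> \<alpha>) [m..<m + length w]}"

definition cyl :: "real \<Rightarrow> nat list \<Rightarrow> real set" where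
  "cyl \<alpha> w = {\<rho>\<in>{0..<1}. \<forall>i<length w. sword \<rho> \<alpha> i = w ! i}"

text \<open>I is an arc [a,b) of the circle [0,1) whose endpoints (as points of the circle,
  so b = 1 is identified with 0) are x and y.\<close>
definition arc_endpoints :: "real set \<Rightarrow> real \<Rightarrow> real \<Rightarrow> bool" where
  "arc_endpoints I x y \<longleftrightarrow>
     (\<exists>a b. 0 \<le> a \<and> a < b \<and> b \<le> 1 \<and> I = {a..<b} \<and> {a, frac b} = {x, y})"

definition singular_factor :: "real \<Rightarrow> nat \<Rightarrow> nat list \<Rightarrow> bool" where
  "singular_factor \<alpha> k s \<longleftrightarrow>
     s \<in> factors_slope \<alpha> \<and> length s = cf_q \<alpha> k \<and>
     arc_endpoints (cyl \<alpha> s) 0 (frac (- (real (cf_q \<alpha> k) * \<alpha>)))"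

definition parikh :: "nat list \<Rightarrow> nat \<times> nat" where
  "parikh u = (count_list u 0, count_list u 1)"

definition parikh_contained :: "nat \<times> nat \<Rightarrow> nat \<times> nat \<Rightarrow> bool" where
  "parikh_contained P Q \<longleftrightarrow> fst P \<le> fst Q \<and> snd P \<le> snd Q \<and> P \<noteq> Q"

end

theory Submission
  imports Defs
begin

(* Let n = q_k and x = n alpha. The letters of s_rho are the differences
  floor (rho + (i+1) alpha) - floor (rho + i alpha), so every factor of length n contains
  floor x or floor x + 1 ones, while the prefix of length m of s_rho contains
  floor (rho + m alpha) ones. For rho in [s] this count t does not depend on rho, and [s] is an
  interval [a,b) with a <= c <= b, where c = {-x} = floor x + 1 - x; hence
  t <= c + m alpha <= t + 1 with c + m alpha = floor x + 1 - (n - m) alpha, i.e. a proper prefix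
  has at most floor x ones and fewer than n - floor x zeros.
  The reflection rho |-> {c - rho} maps [s] into itself and, for rho avoiding the points
  {-j alpha}, j <= n, reverses the first n letters of s_rho, so s is a palindrome; this gives (i)
  and carries the prefix bound over to suffixes. *)

lemma floor_int_diff_nonint:
  fixes z :: "'a::floor_ceiling"
  assumes "z \<notin> \<int>"
  shows "\<lfloor>of_int K - z\<rfloor> = K - \<lfloor>z\<rfloor> - 1"
proof -
  have "of_int \<lfloor>z\<rfloor> < z" "z < of_int \<lfloor>z\<rfloor> + 1"
    using assms of_int_floor_le[of z] by (metis Ints_of_int order_le_imp_less_or_eq, linarith)
  then show ?thesis
    by (intro floor_unique) (simp_all add: algebra_simps)
qed

lemma frac_neg_notin_Ints:
  fixes x :: "'a::floor_ceiling"
  assumes "x \<notin> \<int>"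
  shows "frac (- x) = of_int \<lfloor>x\<rfloor> + 1 - x"
  using assms by (simp add: frac_neg frac_def[of x])

lemma floor_const_on_Ico_bounds:
  fixes a b c y :: "'a::floor_ceiling"
  assumes const: "\<forall>\<rho>\<in>{a..<b}. \<lfloor>\<rho> + y\<rfloor> = t" and "a < b" "a \<le> c" "c \<le> b"
  shows "of_int t \<le> c + y" and "c + y \<le> of_int t + 1"
proof -
  have "of_int t \<le> a + y"
    using const \<open>a < b\<close> of_int_floor_le[of "a + y"] by simp
  then show "of_int t \<le> c + y"
    using \<open>a \<le> c\<close> by linarith
  show "c + y \<le> of_int t + 1"
  proof (rule ccontr)
    assume "\<not> c + y \<le> of_int t + 1"
    define \<rho> where "\<rho> = max a (of_int t + 1 - y)"
    have "\<rho> \<in> {a..<b}" and "of_int (t + 1) \<le> \<rho> + y"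
      using \<open>\<not> c + y \<le> of_int t + 1\<close> \<open>a < b\<close> \<open>c \<le> b\<close> by (auto simp: \<rho>_def)
    then show False
      using const by (metis le_floor_iff not_less zless_add1_eq)
  qed
qed

lemma of_nat_mult_irrational_notin_Ints:
  assumes "\<alpha> \<notin> \<rat>" "0 < j"
  shows "real j * \<alpha> \<notin> \<int>"
proof
  assume "real j * \<alpha> \<in> \<int>"
  then obtain z where "real j * \<alpha> = of_int z"
    by (auto elim: Ints_cases)
  then have "\<alpha> = of_int z / real j"
    using assms(2) by (simp add: field_simps)
  with assms(1) show False
    by simp
qed

lemma count_list_binary:
  assumes "set w \<subseteq> {0, 1 :: nat}"
  shows "count_list w 0 + count_list w 1 = length w"
  using sum_count_set[OF assms] by simp

lemma parikh_containedI:
  assumes "set f \<subseteq> {0, 1}" "length p < length f"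
    and "count_list p 0 \<le> count_list f 0" "count_list p 1 \<le> count_list f 1"
  shows "parikh_contained (parikh p) (parikh f)"
proof -
  have "count_list p 0 + count_list p 1 \<le> length p"
    by (induction p) auto
  then show ?thesis
    using assms count_list_binary[OF assms(1)] by (auto simp: parikh_contained_def parikh_def)
qed

lemma funpow_rot_eq_frac:
  assumes "\<rho> \<in> {0..<1}"
  shows "(rot \<alpha> ^^ i) \<rho> = frac (\<rho> + real i * \<alpha>)"
  by (induction i) (use assms in \<open>simp_all add: rot_def algebra_simps\<close>)

lemma sword_binary: "sword \<rho> \<alpha> i \<in> {0, 1}"
  by (simp add: sword_def)

lemma sword_eq_floor_diff:
  assumes "0 < \<alpha>" "\<alpha> < 1" "\<rho> \<in> {0..<1}"
  shows "int (sword \<rho> \<alpha> i) = \<lfloor>\<rho> + real (Suc i) * \<alpha>\<rfloor> - \<lfloor>\<rho> + real i * \<alpha>\<rfloor>"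
proof -
  define x where "x = \<rho> + real i * \<alpha>"
  have x: "x = of_int \<lfloor>x\<rfloor> + frac x" "0 \<le> frac x" "frac x < 1"
    by (simp_all add: frac_def frac_lt_1[of x, unfolded frac_def])
  have "\<rho> + real (Suc i) * \<alpha> = x + \<alpha>"
    by (simp add: x_def algebra_simps)
  moreover have "sword \<rho> \<alpha> i = (if frac x \<in> I0 \<alpha> then 0 else 1)"
    by (simp add: sword_def funpow_rot_eq_frac[OF assms(3)] x_def)
  moreover have "\<lfloor>x + \<alpha>\<rfloor> = \<lfloor>x\<rfloor> + (if frac x \<in> I0 \<alpha> then 0 else 1)"
    using assms x by (intro floor_unique) (auto simp: I0_def; linarith)+
  ultimately show ?thesis
    by (simp add: x_def add.assoc)
qed

lemma count_list_sword_ones: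
  assumes "0 < \<alpha>" "\<alpha> < 1" "\<rho> \<in> {0..<1}"
  shows "int (count_list (map (sword \<rho> \<alpha>) [m..<m + n]) 1)
    = \<lfloor>\<rho> + real (m + n) * \<alpha>\<rfloor> - \<lfloor>\<rho> + real m * \<alpha>\<rfloor>"
proof (induction n)
  case (Suc n)
  have "sword \<rho> \<alpha> (m + n) \<in> {0, 1}"
    by (rule sword_binary)
  then show ?case
    using Suc sword_eq_floor_diff[OF assms, of "m + n"] by auto
qed simp

lemma factors_slope_binary:
  assumes "f \<in> factors_slope \<alpha>"
  shows "set f \<subseteq> {0, 1}"
proof -
  obtain \<rho> m where "f = map (sword \<rho> \<alpha>) [m..<m + length f]"
    using assms unfolding factors_slope_def by blast
  then have "set f = sword \<rho> \<alpha> ` set [m..<m + length f]"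
    by (metis list.set_map)
  then show ?thesis
    using sword_binary by (simp add: image_subset_iff)
qed

lemma factors_slope_count_ones:
  assumes "0 < \<alpha>" "\<alpha> < 1" "f \<in> factors_slope \<alpha>"
  shows "\<lfloor>real (length f) * \<alpha>\<rfloor> \<le> int (count_list f 1)"
    and "int (count_list f 1) \<le> \<lfloor>real (length f) * \<alpha>\<rfloor> + 1"
proof -
  obtain \<rho> m where \<rho>: "\<rho> \<in> {0..<1}" and f: "f = map (sword \<rho> \<alpha>) [m..<m + length f]"
    using assms(3) unfolding factors_slope_def by blast
  have split: "\<rho> + real (m + length f) * \<alpha> = (\<rho> + real m * \<alpha>) + real (length f) * \<alpha>"
    by (simp add: algebra_simps)
  have "int (count_list f 1)
      = \<lfloor>(\<rho> + real m * \<alpha>) + real (length f) * \<alpha>\<rfloor> - \<lfloor>\<rho> + real m * \<alpha>\<rfloor>"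
    using count_list_sword_ones[OF assms(1,2) \<rho>, of m "length f"] unfolding split f[symmetric] .
  then show "\<lfloor>real (length f) * \<alpha>\<rfloor> \<le> int (count_list f 1)"
    and "int (count_list f 1) \<le> \<lfloor>real (length f) * \<alpha>\<rfloor> + 1"
    by (simp_all add: floor_add)
qed

lemma map_sword_eq_if_mem_cyl:
  assumes "\<rho> \<in> cyl \<alpha> s"
  shows "map (sword \<rho> \<alpha>) [0..<length s] = s"
  using assms by (intro nth_equalityI) (auto simp: cyl_def)

lemma count_list_take_ones_cyl:
  assumes "0 < \<alpha>" "\<alpha> < 1" "\<rho> \<in> cyl \<alpha> s" "m \<le> length s"
  shows "int (count_list (take m s) 1) = \<lfloor>\<rho> + real m * \<alpha>\<rfloor>"
proof -
  have \<rho>: "\<rho> \<in> {0..<1}"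
    using assms(3) by (simp add: cyl_def)
  have "take m s = map (sword \<rho> \<alpha>) [0..<0 + m]"
    using map_sword_eq_if_mem_cyl[OF assms(3)] assms(4) by (metis add_0 take_map take_upt)
  moreover have "\<lfloor>\<rho>\<rfloor> = 0"
    using \<rho> by (simp add: floor_eq_iff)
  ultimately show ?thesis
    using count_list_sword_ones[OF assms(1,2) \<rho>, of 0 m] by simp
qed

lemma map_sword_reflect:
  assumes "0 < \<alpha>" "\<alpha> < 1" "\<rho> \<in> {0..<1}" and generic: "\<forall>j\<le>n. \<rho> + real j * \<alpha> \<notin> \<int>"
  shows "map (sword (frac (- (real n * \<alpha>) - \<rho>)) \<alpha>) [0..<n] = rev (map (sword \<rho> \<alpha>) [0..<n])"
proof (rule nth_equalityI)
  define \<rho>' K where "\<rho>' = frac (- (real n * \<alpha>) - \<rho>)" and "K = - \<lfloor>- (real n * \<alpha>) - \<rho>\<rfloor>"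
  have "\<rho>' \<in> {0..<1}"
    using frac_lt_1 by (simp add: \<rho>'_def)
  have floor_reflect: "\<lfloor>\<rho>' + real j * \<alpha>\<rfloor> = K - \<lfloor>\<rho> + real (n - j) * \<alpha>\<rfloor> - 1" if "j \<le> n" for j
  proof -
    have "\<rho>' + real j * \<alpha> = of_int K - (\<rho> + real (n - j) * \<alpha>)"
      using that by (simp add: \<rho>'_def K_def frac_def of_nat_diff algebra_simps)
    moreover have "\<rho> + real (n - j) * \<alpha> \<notin> \<int>"
      using generic by simp
    ultimately show ?thesis
      by (simp add: floor_int_diff_nonint)
  qed
  show "length (map (sword \<rho>' \<alpha>) [0..<n]) = length (rev (map (sword \<rho> \<alpha>) [0..<n]))"
    by simp
  fix i assume "i < length (map (sword \<rho>' \<alpha>) [0..<n])"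
  then have i: "i < n" by simp
  have "int (sword \<rho>' \<alpha> i) = \<lfloor>\<rho>' + real (Suc i) * \<alpha>\<rfloor> - \<lfloor>\<rho>' + real i * \<alpha>\<rfloor>"
    using sword_eq_floor_diff[OF assms(1,2) \<open>\<rho>' \<in> {0..<1}\<close>] .
  also have "\<dots> = \<lfloor>\<rho> + real (Suc (n - Suc i)) * \<alpha>\<rfloor> - \<lfloor>\<rho> + real (n - Suc i) * \<alpha>\<rfloor>"
    using i floor_reflect[of i] floor_reflect[of "Suc i"] by (simp add: Suc_diff_Suc)
  also have "\<dots> = int (sword \<rho> \<alpha> (n - Suc i))"
    using sword_eq_floor_diff[OF assms(1-3)] by simp
  finally show "map (sword \<rho>' \<alpha>) [0..<n] ! i = rev (map (sword \<rho> \<alpha>) [0..<n]) ! i"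
    using i by (simp add: rev_nth)
qed

lemma cf_q_pos: "0 < cf_a \<alpha> 1 \<Longrightarrow> 0 < cf_q \<alpha> k"
  by (induction \<alpha> k rule: cf_q.induct) auto

lemma arc_endpoints_zero:
  assumes "arc_endpoints I 0 c" "0 < c"
  shows "I = {0..<c} \<or> I = {c..<1}"
proof -
  obtain a b where ab: "0 \<le> a" "a < b" "b \<le> 1" "I = {a..<b}" "{a, frac b} = {0, c}"
    using assms(1) unfolding arc_endpoints_def by blast
  show ?thesis
  proof (cases "a = 0")
    case True
    then have "frac b = c"
      using ab(5) assms(2) by (auto simp: doubleton_eq_iff)
    moreover have "b \<noteq> 1"
      using \<open>frac b = c\<close> assms(2) by auto
    ultimately have "b < 1"
      using ab(3) by simp
    then show ?thesis
      using \<open>frac b = c\<close> ab True by (simp add: frac_eq)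
  next
    case False
    then have "a = c" "b \<in> \<int>"
      using ab(5) by (auto simp: doubleton_eq_iff)
    then obtain z where "b = of_int z"
      by (auto elim: Ints_cases)
    then have "b = 1"
      using ab(1-3) by simp
    then show ?thesis
      using ab \<open>a = c\<close> by simp
  qed
qed

lemma arc_endpoints_zero_reflect:
  assumes "arc_endpoints I 0 c" "0 < c" "c < 1" "\<rho> \<in> I" "\<rho> \<noteq> 0" "\<rho> \<noteq> c"
  shows "frac (c - \<rho>) \<in> I"
  using arc_endpoints_zero[OF assms(1,2)]
proof
  assume I: "I = {0..<c}"
  then have "frac (c - \<rho>) = c - \<rho>"
    using assms(3,4) by (simp add: frac_eq)
  then show ?thesis
    using I assms(4,5) by simp
next
  assume I: "I = {c..<1}"
  then have "frac (c - \<rho>) = c - \<rho> + 1"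
    using assms(2,3,4,6) by (subst frac_unique_iff) (simp add: Ints_minus)
  then show ?thesis
    using I assms(4,6) by simp
qed

lemma singular_prefix_count_bounds:
  assumes "0 < \<alpha>" "\<alpha> < 1" "real n * \<alpha> \<notin> \<int>" "length s = n"
    and arc: "arc_endpoints (cyl \<alpha> s) 0 (frac (- (real n * \<alpha>)))" and "m < n"
  shows "int (count_list (take m s) 1) \<le> \<lfloor>real n * \<alpha>\<rfloor>"
    and "int (count_list (take m s) 0) < int n - \<lfloor>real n * \<alpha>\<rfloor>"
proof -
  define x c t where "x = real n * \<alpha>" and "c = frac (- x)"
    and "t = int (count_list (take m s) 1)"
  have c: "c = of_int \<lfloor>x\<rfloor> + 1 - x"
    using frac_neg_notin_Ints assms(3) by (simp add: c_def x_def)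
  have "0 < c" "c < 1"
    using assms(3) frac_lt_1 by (auto simp: c_def x_def)
  then obtain a b where J: "cyl \<alpha> s = {a..<b}" "a < b" "a \<le> c" "c \<le> b"
    using arc_endpoints_zero[OF arc[folded x_def c_def]] by fastforce
  have "\<forall>\<rho>\<in>{a..<b}. \<lfloor>\<rho> + real m * \<alpha>\<rfloor> = t"
    using count_list_take_ones_cyl[OF assms(1,2)] J(1) assms(4,6) by (simp add: t_def)
  then have "of_int t \<le> c + real m * \<alpha>" "c + real m * \<alpha> \<le> of_int t + 1"
    using floor_const_on_Ico_bounds J(2-4) by blast+
  moreover have "x - real m * \<alpha> = real (n - m) * \<alpha>"
    using assms(6) by (simp add: x_def of_nat_diff algebra_simps)
  moreover have "0 < real (n - m) * \<alpha>" "real (n - m) * \<alpha> < real (n - m)"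
    using assms(1,2,6) by simp_all
  ultimately have "real_of_int t < real_of_int (\<lfloor>x\<rfloor> + 1)"
    and "real_of_int (\<lfloor>x\<rfloor> - int (n - m)) < real_of_int t"
    unfolding of_int_add of_int_diff of_int_of_nat_eq of_int_1 using c by linarith+
  then have t: "t \<le> \<lfloor>x\<rfloor>" "\<lfloor>x\<rfloor> - int (n - m) < t"
    unfolding of_int_less_iff by simp_all
  then show "int (count_list (take m s) 1) \<le> \<lfloor>real n * \<alpha>\<rfloor>"
    by (simp add: t_def x_def)
  have "a \<in> cyl \<alpha> s"
    using J by simp
  then have "set s \<subseteq> {0, 1}"
    using map_sword_eq_if_mem_cyl sword_binary by (metis image_subset_iff list.set_map)
  then have "set (take m s) \<subseteq> {0, 1}"
    by (meson in_set_takeD subset_iff)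
  then have "count_list (take m s) 0 + count_list (take m s) 1 = m"
    using count_list_binary[of "take m s"] assms(4,6) by simp
  then show "int (count_list (take m s) 0) < int n - \<lfloor>real n * \<alpha>\<rfloor>"
    using t assms(6) by (simp add: t_def x_def)
qed

lemma singular_strict_prefix_parikh_contained:
  assumes "0 < \<alpha>" "\<alpha> < 1" "real n * \<alpha> \<notin> \<int>" "length s = n"
    and "arc_endpoints (cyl \<alpha> s) 0 (frac (- (real n * \<alpha>)))"
    and "strict_prefix p s" "f \<in> factors_slope \<alpha>" "length f = n"
  shows "parikh_contained (parikh p) (parikh f)"
proof -
  have p: "p = take (length p) s" "length p < n"
    using assms(4,6) prefix_length_less by (auto simp: strict_prefix_def prefix_def)
  note prefix_bounds = singular_prefix_count_bounds[OF assms(1-5) p(2), folded p(1)]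
  have f: "set f \<subseteq> {0, 1}" "count_list f 0 + count_list f 1 = n"
    "\<lfloor>real n * \<alpha>\<rfloor> \<le> int (count_list f 1)" "int (count_list f 1) \<le> \<lfloor>real n * \<alpha>\<rfloor> + 1"
    using factors_slope_binary count_list_binary factors_slope_count_ones[OF assms(1,2)] assms(7,8)
    by auto
  show ?thesis
    using f prefix_bounds p(2) assms(8) by (intro parikh_containedI) linarith+
qed

lemma singular_palindrome:
  assumes "0 < \<alpha>" "\<alpha> < 1" "real n * \<alpha> \<notin> \<int>" "length s = n"
    and arc: "arc_endpoints (cyl \<alpha> s) 0 (frac (- (real n * \<alpha>)))"
  shows "rev s = s"
proof -
  define c where "c = frac (- (real n * \<alpha>))"
  define E where "E = (\<lambda>j. frac (- (real j * \<alpha>))) ` {..n}"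
  have "infinite (cyl \<alpha> s)"
    using arc infinite_Ico unfolding arc_endpoints_def by metis
  then have "infinite (cyl \<alpha> s - E)"
    by (simp add: E_def Diff_infinite_finite)
  then obtain \<rho> where \<rho>: "\<rho> \<in> cyl \<alpha> s" "\<rho> \<notin> E"
    by (metis Diff_iff finite.emptyI ex_in_conv)
  then have "\<rho> \<in> {0..<1}"
    by (simp add: cyl_def)
  have generic: "\<forall>j\<le>n. \<rho> + real j * \<alpha> \<notin> \<int>"
  proof (intro allI impI notI)
    fix j assume "j \<le> n" "\<rho> + real j * \<alpha> \<in> \<int>"
    moreover have "- (real j * \<alpha>) - \<rho> = - (\<rho> + real j * \<alpha>)"
      by simp
    ultimately have "- (real j * \<alpha>) - \<rho> \<in> \<int>"
      by (simp only: Ints_minus)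
    then have "frac (- (real j * \<alpha>)) = \<rho>"
      using \<open>\<rho> \<in> {0..<1}\<close> by (simp add: frac_unique_iff)
    with \<rho>(2) \<open>j \<le> n\<close> show False
      by (auto simp: E_def)
  qed
  have "0 < c" "c < 1"
    using assms(3) frac_lt_1 by (auto simp: c_def)
  moreover have "0 \<in> E"
    unfolding E_def by (rule image_eqI[of _ _ 0]) simp_all
  moreover have "c \<in> E"
    unfolding E_def c_def by (rule image_eqI[of _ _ n]) simp_all
  ultimately have "frac (c - \<rho>) \<in> cyl \<alpha> s"
    using \<rho> by (intro arc_endpoints_zero_reflect[OF arc[folded c_def]]) auto
  moreover have "frac (c - \<rho>) = frac (- (real n * \<alpha>) - \<rho>)"
    by (simp only: c_def diff_conv_add_uminus frac_add_simps)
  ultimately have "frac (- (real n * \<alpha>) - \<rho>) \<in> cyl \<alpha> s"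
    by simp
  then have "s = map (sword (frac (- (real n * \<alpha>) - \<rho>)) \<alpha>) [0..<n]"
    using map_sword_eq_if_mem_cyl assms(4) by metis
  also have "\<dots> = rev (map (sword \<rho> \<alpha>) [0..<n])"
    using map_sword_reflect[OF assms(1,2) \<open>\<rho> \<in> {0..<1}\<close> generic] .
  also have "\<dots> = rev s"
    using map_sword_eq_if_mem_cyl[OF \<rho>(1)] assms(4) by simp
  finally show ?thesis
    by simp
qed

theorem lemma2p5:
  fixes \<alpha> :: real and k :: nat and s :: "nat list"
  assumes "0 < \<alpha>" and "\<alpha> < 1" and "\<alpha> \<notin> \<rat>"
    and "cf_a \<alpha> 1 \<ge> 2"
    and "singular_factor \<alpha> k s"
  shows "hd s = last s \<and> rev s = s \<and>
    (\<forall>p f. p \<noteq> [] \<and> strict_prefix p s \<and> f \<in> factors_slope \<alpha> \<and> length f = cf_q \<alpha> k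
            \<longrightarrow> parikh_contained (parikh p) (parikh f)) \<and>
    (\<forall>p f. p \<noteq> [] \<and> strict_suffix p s \<and> f \<in> factors_slope \<alpha> \<and> length f = cf_q \<alpha> k
            \<longrightarrow> parikh_contained (parikh p) (parikh f))"
proof -
  define n where "n = cf_q \<alpha> k"
  have "0 < n"
    using cf_q_pos assms(4) by (simp add: n_def)
  then have nonint: "real n * \<alpha> \<notin> \<int>"
    using of_nat_mult_irrational_notin_Ints assms(3) by blast
  have s: "length s = n" "arc_endpoints (cyl \<alpha> s) 0 (frac (- (real n * \<alpha>)))"
    using assms(5) by (simp_all add: singular_factor_def n_def)
  note singular = assms(1,2) nonint s
  have palindrome: "rev s = s"
    using singular_palindrome[OF singular] .
  moreover have "hd s = last s"
    using palindrome \<open>0 < n\<close> s(1) by (metis hd_rev length_greater_0_conv)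
  moreover have prefix: "parikh_contained (parikh p) (parikh f)"
    if "strict_prefix p s" "f \<in> factors_slope \<alpha>" "length f = n" for p f
    using singular_strict_prefix_parikh_contained[OF singular that] .
  moreover have "parikh_contained (parikh p) (parikh f)"
    if "strict_suffix p s" "f \<in> factors_slope \<alpha>" "length f = n" for p f
  proof -
    have "strict_prefix (rev p) s"
      using that(1) palindrome by (metis strict_suffix_to_prefix)
    then show ?thesis
      using prefix[of "rev p" f] that(2,3) by (simp add: parikh_def)
  qed
  ultimately show ?thesis
    by (auto simp: n_def)
qed

end
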